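(* Let $U=[N]$, let $\ell$ be a positive integer dividing $N$, let $\mathcal{S}=\{S_1,\dots,S_m\}$ be a collection of subsets of $U$ each of size $N/\ell$, and let $\varepsilon>0$. Let $I_{\mathrm{rp}}$ be the $k$-RP instance with $k=\ell$, point set $\mathcal{X}=U\cup\mathcal{S}$ (an element point for each $u\in U$ and a set point for each $S\in\mathcal{S}$), distance $d(u,S)=1$ if $u\in S$ and $d(u,S)=2-\varepsilon$ if $u\notin S$ for $u\in U$, $S\in\mathcal{S}$; $d(u_1,u_2)=2$ for distinct $u_1,u_2\in U$; $d(S_1,S_2)=1$ for distinct set points; and $P$ uniform over the element points $U$. If there exist $\ell$ sets in $\mathcal{S}$ whose union is $U$ (a full covering instance), then there exists a $k$-RP solution for $I_{\mathrm{rp}}$ of cost at most $k\cdot(1+1/e)$.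
   Context: For a finite metric space $(\mathcal{X},d)$, $\mathcal{X}_k$ is the set of multisets of exactly $k$ points of $\mathcal{X}$; for $A,B\in\mathcal{X}_k$, $d_k(A,B)$ is the minimum, over perfect matchings between the elements of $A$ and of $B$ (with multiplicity), of the sum of the distances of matched pairs; $P_k$ is the distribution of $k$ points drawn i.i.d. from $P$. A $k$-RP solution is any $K\in\mathcal{X}_k$, and its cost is $\mathbb{E}_{L\sim P_k}[d_k(K,L)]$. *)

theory Defs
  imports "HOL-Probability.Probability" "HOL-Library.Multiset"
begin

text \<open>Matching distance d_k between multisets A, B of equal size: minimum over perfect
  matchings (= orderings of A and B as lists, paired index-wise) of the sum of distances.\<close>
definition match_dist :: "('a \<Rightarrow> 'a \<Rightarrow> real) \<Rightarrow> 'a multiset \<Rightarrow> 'a multiset \<Rightarrow> real" where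
  "match_dist d A B =
     Min {(\<Sum>i<size A. d (xs ! i) (ys ! i)) | xs ys. mset xs = A \<and> mset ys = B}"

definition Pk :: "'a pmf \<Rightarrow> nat \<Rightarrow> 'a multiset pmf" where
  "Pk P k = map_pmf mset (replicate_pmf k P)"

definition krp_cost :: "('a \<Rightarrow> 'a \<Rightarrow> real) \<Rightarrow> 'a pmf \<Rightarrow> nat \<Rightarrow> 'a multiset \<Rightarrow> real" where
  "krp_cost d P k K = measure_pmf.expectation (Pk P k) (\<lambda>L. match_dist d K L)"

datatype rp_point = Elem nat | SetPt nat

definition rp_points :: "nat \<Rightarrow> nat \<Rightarrow> rp_point set" where
  "rp_points N m = Elem ` {1..N} \<union> SetPt ` {1..m}"

fun rp_dist :: "(nat \<Rightarrow> nat set) \<Rightarrow> real \<Rightarrow> rp_point \<Rightarrow> rp_point \<Rightarrow> real" where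
  "rp_dist S \<epsilon> (Elem u) (SetPt i) = (if u \<in> S i then 1 else 2 - \<epsilon>)"
| "rp_dist S \<epsilon> (SetPt i) (Elem u) = (if u \<in> S i then 1 else 2 - \<epsilon>)"
| "rp_dist S \<epsilon> (Elem u) (Elem v) = (if u = v then 0 else 2)"
| "rp_dist S \<epsilon> (SetPt i) (SetPt j) = (if i = j then 0 else 1)"

end

theory Submission
  imports Defs
begin

(* Take as centre the multiset of the l set points of the cover. Each element u gets an owner
   set containing it; since l sets of size N/l cover [N], every owner class is a whole covering
   set and has probability 1/l. Matching the sample greedily, a point whose owner is still free
   pays 1 and every other point pays at most 2, so the cost is at most 2l minus the number of
   distinct owners hit. Each owner is hit with probability 1 - (1 - 1/l)^l >= 1 - 1/e. *)

lemma emeasure_replicate_pmf_lists_subset: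
  "emeasure (measure_pmf (replicate_pmf n p)) {xs. set xs \<subseteq> A} = emeasure (measure_pmf p) A ^ n"
proof (induction n)
  case 0
  then show ?case by (simp add: indicator_def)
next
  case (Suc n)
  have "indicator {xs. set xs \<subseteq> A} (x # xs) = (indicator A x * indicator {xs. set xs \<subseteq> A} xs :: ennreal)"
    for x xs by (simp add: indicator_def)
  then have "emeasure (measure_pmf (replicate_pmf (Suc n) p)) {xs. set xs \<subseteq> A}
      = (\<integral>\<^sup>+x. indicator A x * emeasure (measure_pmf (replicate_pmf n p)) {xs. set xs \<subseteq> A} \<partial>measure_pmf p)"
    by (simp add: emeasure_return nn_integral_cmult)
  also have "\<dots> = emeasure (measure_pmf p) A ^ Suc n"
    using Suc.IH by (simp add: nn_integral_multc mult.commute)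
  finally show ?case .
qed

lemma measure_replicate_pmf_exists:
  "measure_pmf.prob (replicate_pmf n p) {xs. \<exists>x\<in>set xs. P x}
     = 1 - (1 - measure_pmf.prob p {x. P x}) ^ n"
proof -
  have compl: "measure_pmf.prob p {x. \<not> P x} = 1 - measure_pmf.prob p {x. P x}"
    using measure_pmf.prob_compl[of "{x. P x}" p] by (simp add: Compl_eq_Diff_UNIV[symmetric] Collect_neg_eq)
  have "measure_pmf.prob (replicate_pmf n p) {xs. set xs \<subseteq> {x. \<not> P x}} = measure_pmf.prob p {x. \<not> P x} ^ n"
    using emeasure_replicate_pmf_lists_subset[of n p "{x. \<not> P x}"]
    by (simp add: measure_pmf.emeasure_eq_measure ennreal_power)
  moreover have "{xs. \<exists>x\<in>set xs. P x} = UNIV - {xs. set xs \<subseteq> {x. \<not> P x}}" by auto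
  ultimately show ?thesis
    using compl measure_pmf.prob_compl[of "{xs. set xs \<subseteq> {x. \<not> P x}}" "replicate_pmf n p"] by simp
qed

lemma greedy_assignment:
  fixes c :: "'a \<Rightarrow> 'b \<Rightarrow> real"
  assumes "finite T" "card T = length xs" "\<forall>x\<in>set xs. c x (own x) \<le> 1 \<and> (\<forall>j. c x j \<le> 2)"
  shows "\<exists>ys. distinct ys \<and> set ys = T \<and>
    (\<Sum>i<length xs. c (xs ! i) (ys ! i)) \<le> 2 * real (length xs) - real (card (T \<inter> own ` set xs))"
  using assms
proof (induction xs arbitrary: T)
  case Nil
  then show ?case by simp
next
  case (Cons x xs)
  let ?B = "own ` set xs"
  have "card ?B < card T"
    using Cons.prems(2) card_image_le[of "set xs" own] card_length[of xs] by simp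
  then have "T - ?B \<noteq> {}"
    using card_mono[of ?B T] by (metis Diff_eq_empty_iff finite_imageI finite_set leD)
  \<comment> \<open>x takes its owner if no later point owns it, and otherwise a target owned by no later
    point (one exists by counting); either way the later points keep all their owners.\<close>
  define good where "good \<longleftrightarrow> own x \<in> T - ?B"
  define j where "j = (if good then own x else (SOME j. j \<in> T - ?B))"
  have j: "j \<in> T - ?B"
    using \<open>T - ?B \<noteq> {}\<close> some_in_eq[of "T - ?B"] unfolding j_def good_def by auto
  then have "card (T - {j}) = length xs"
    using Cons.prems(1,2) by simp
  then obtain ys where ys: "distinct ys" "set ys = T - {j}"
    "(\<Sum>i<length xs. c (xs ! i) (ys ! i)) \<le> 2 * real (length xs) - real (card ((T - {j}) \<inter> ?B))"
    using Cons.IH[of "T - {j}"] Cons.prems(1,3) by auto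
  have "(T - {j}) \<inter> ?B = T \<inter> ?B"
    using j by blast
  moreover have "T \<inter> own ` set (x # xs) = (if good then insert (own x) (T \<inter> ?B) else T \<inter> ?B)"
    unfolding good_def by auto
  moreover have "c x j \<le> (if good then 1 else 2)"
    using Cons.prems(3) unfolding j_def by simp
  moreover have "own x \<notin> T \<inter> ?B" if good
    using that unfolding good_def by blast
  ultimately have "c x j + (\<Sum>i<length xs. c (xs ! i) (ys ! i))
      \<le> 2 * real (length (x # xs)) - real (card (T \<inter> own ` set (x # xs)))"
    using ys(3) Cons.prems(1) by (cases good) simp_all
  moreover have "(\<Sum>i<length (x # xs). c ((x # xs) ! i) ((j # ys) ! i))
      = c x j + (\<Sum>i<length xs. c (xs ! i) (ys ! i))"
    by (simp del: sum.lessThan_Suc add: sum.lessThan_Suc_shift)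
  moreover have "distinct (j # ys)" "set (j # ys) = T"
    using ys(1,2) j by auto
  ultimately show ?case
    by metis
qed

lemma finite_lists_mset_eq: "finite {xs. mset xs = M}"
  by (rule finite_subset[OF _ finite_lists_length_eq[of "set_mset M" "size M"]]) auto

lemma match_dist_le:
  assumes "mset xs = A" "mset ys = B"
  shows "match_dist d A B \<le> (\<Sum>i<size A. d (xs ! i) (ys ! i))"
proof -
  have "{(\<Sum>i<size A. d (xs ! i) (ys ! i)) | xs ys. mset xs = A \<and> mset ys = B}
     = (\<lambda>(xs, ys). \<Sum>i<size A. d (xs ! i) (ys ! i)) ` ({xs. mset xs = A} \<times> {ys. mset ys = B})"
    by auto
  then have "finite {(\<Sum>i<size A. d (xs ! i) (ys ! i)) | xs ys. mset xs = A \<and> mset ys = B}"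
    by (simp add: finite_lists_mset_eq)
  then show ?thesis
    unfolding match_dist_def using assms by (intro Min_le) auto
qed

lemma match_dist_owner_le:
  assumes "finite J" "length xs = card J" "\<forall>x\<in>set xs. d (f (own x)) x \<le> 1 \<and> (\<forall>j. d (f j) x \<le> 2)"
  shows "match_dist d (image_mset f (mset_set J)) (mset xs)
           \<le> 2 * real (card J) - real (card (J \<inter> own ` set xs))"
proof -
  obtain ys where ys: "distinct ys" "set ys = J"
      "(\<Sum>i<length xs. d (f (ys ! i)) (xs ! i)) \<le> 2 * real (length xs) - real (card (J \<inter> own ` set xs))"
    using greedy_assignment[of J xs "\<lambda>x j. d (f j) x" own] assms by auto
  have "mset (map f ys) = image_mset f (mset_set J)"
    using mset_set_set[OF ys(1)] ys(2) by simp
  moreover have "length ys = length xs"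
    using ys assms(2) distinct_card by fastforce
  ultimately have "match_dist d (image_mset f (mset_set J)) (mset xs) \<le> (\<Sum>i<length xs. d (f (ys ! i)) (xs ! i))"
    using match_dist_le[of "map f ys" _ xs "mset xs" d] assms(2) by simp
  with ys(3) assms(2) show ?thesis by simp
qed

lemma card_Int_eq_sum_indicator:
  "finite J \<Longrightarrow> real (card (J \<inter> B)) = (\<Sum>j\<in>J. indicator B j)"
  by (simp add: indicator_def sum.If_cases)

lemma krp_cost_owner_le:
  fixes P :: "'a pmf" and f :: "'b \<Rightarrow> 'a"
  assumes "finite (set_pmf P)" "finite J" "card J = k"
    and "\<forall>x\<in>set_pmf P. d (f (own x)) x \<le> 1 \<and> (\<forall>j. d (f j) x \<le> 2)"
  shows "krp_cost d P k (image_mset f (mset_set J))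
           \<le> 2 * real k - (\<Sum>j\<in>J. 1 - (1 - measure_pmf.prob P {x. own x = j}) ^ k)"
proof -
  define Q where "Q = replicate_pmf k P"
  define hit where "hit j = {xs. \<exists>x\<in>set xs. own x = j}" for j
  have set_Q: "set_pmf Q = {xs. set xs \<subseteq> set_pmf P \<and> length xs = k}"
    unfolding Q_def set_replicate_pmf by auto
  have "finite (set_pmf Q)"
    unfolding set_Q using finite_lists_length_eq[OF assms(1)] by simp
  then have integrable: "integrable (measure_pmf Q) g" for g :: "'a list \<Rightarrow> real"
    by (rule integrable_measure_pmf_finite)
  have "match_dist d (image_mset f (mset_set J)) (mset xs) \<le> 2 * real k - (\<Sum>j\<in>J. indicator (hit j) xs)"
    if "xs \<in> set_pmf Q" for xs
  proof -
    have "xs \<in> hit j \<longleftrightarrow> j \<in> own ` set xs" for j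
      unfolding hit_def by auto
    then have "real (card (J \<inter> own ` set xs)) = (\<Sum>j\<in>J. indicator (hit j) xs)"
      using card_Int_eq_sum_indicator[OF assms(2), of "own ` set xs"] by (simp add: indicator_def)
    then show ?thesis
      using match_dist_owner_le[of J xs d f own] that assms(2-4) set_Q by auto
  qed
  then have "krp_cost d P k (image_mset f (mset_set J))
      \<le> measure_pmf.expectation Q (\<lambda>xs. 2 * real k - (\<Sum>j\<in>J. indicator (hit j) xs))"
    unfolding krp_cost_def Pk_def Q_def[symmetric] integral_map_pmf
    by (intro integral_mono_AE integrable) (simp add: AE_measure_pmf_iff)
  also have "\<dots> = 2 * real k - (\<Sum>j\<in>J. measure_pmf.prob Q (hit j))"
    by (simp add: integrable)
  also have "\<dots> = 2 * real k - (\<Sum>j\<in>J. 1 - (1 - measure_pmf.prob P {x. own x = j}) ^ k)"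
    unfolding Q_def hit_def measure_replicate_pmf_exists ..
  finally show ?thesis .
qed

lemma krp_cost_balanced_owner_le:
  fixes P :: "'a pmf" and f :: "'b \<Rightarrow> 'a"
  assumes "finite (set_pmf P)" "finite J" "card J = k" "k > 0"
    and "\<forall>x\<in>set_pmf P. d (f (own x)) x \<le> 1 \<and> (\<forall>j. d (f j) x \<le> 2)"
    and "\<And>j. j \<in> J \<Longrightarrow> measure_pmf.prob P {x. own x = j} = 1 / real k"
  shows "krp_cost d P k (image_mset f (mset_set J)) \<le> real k * (1 + 1 / exp 1)"
proof -
  have "krp_cost d P k (image_mset f (mset_set J)) \<le> 2 * real k - real k * (1 - (1 - 1 / real k) ^ k)"
    using krp_cost_owner_le[OF assms(1-3,5)] assms(2,3,6) by simp
  also have "\<dots> = real k + real k * (1 - 1 / real k) ^ k"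
    by (simp add: algebra_simps)
  also have "\<dots> \<le> real k + real k * exp (-1)"
    using exp_ge_one_minus_x_over_n_power_n[of 1 k] assms(4) by simp
  also have "\<dots> = real k * (1 + 1 / exp 1)"
    by (simp add: exp_minus field_simps)
  finally show ?thesis .
qed

lemma card_fiber_eq_if_fibers_bounded:
  assumes "finite E" "finite J" "own ` E \<subseteq> J" "card E = card J * n"
    and "\<And>j. j \<in> J \<Longrightarrow> card {x\<in>E. own x = j} \<le> n" "j \<in> J"
  shows "card {x\<in>E. own x = j} = n"
proof -
  have "(\<Sum>j\<in>J. card {x\<in>E. own x = j}) = (\<Sum>j\<in>J. n)"
    using sum_fun_comp[OF assms(1-3), of "\<lambda>_. 1 :: nat"] assms(4) by simp
  then show ?thesis
    by (rule sum_mono_inv[OF _ assms(5,6,2)])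
qed

lemma exact_cover_owner:
  fixes S :: "'b \<Rightarrow> 'a set"
  assumes "finite U" "finite J" "(\<Union>j\<in>J. S j) = U" "\<forall>j\<in>J. card (S j) \<le> n" "card U = card J * n"
  obtains own where "\<forall>u\<in>U. own u \<in> J \<and> u \<in> S (own u)"
    and "\<And>j. j \<in> J \<Longrightarrow> card {u\<in>U. own u = j} = n"
proof -
  have "\<forall>u\<in>U. \<exists>j. j \<in> J \<and> u \<in> S j"
    using assms(3) by blast
  from bchoice[OF this] obtain own where own: "\<forall>u\<in>U. own u \<in> J \<and> u \<in> S (own u)"
    by blast
  have "card {u\<in>U. own u = j} \<le> n" if "j \<in> J" for j
  proof -
    have "S j \<subseteq> U"
      using assms(3) that by blast
    moreover have "{u\<in>U. own u = j} \<subseteq> S j"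
      using own by blast
    ultimately have "card {u\<in>U. own u = j} \<le> card (S j)"
      using assms(1) by (simp add: card_mono finite_subset)
    also have "card (S j) \<le> n"
      using assms(4) that by blast
    finally show ?thesis .
  qed
  then have "card {u\<in>U. own u = j} = n" if "j \<in> J" for j
    using card_fiber_eq_if_fibers_bounded[OF assms(1,2) _ assms(5)] own that by blast
  with own show ?thesis
    using that by blast
qed

lemma rp_dist_SetPt_le:
  assumes "\<epsilon> > 0" "x \<in> Elem ` S i"
  shows "rp_dist S \<epsilon> (SetPt i) x \<le> 1" "rp_dist S \<epsilon> (SetPt j) x \<le> 2"
  using assms by auto

theorem lemma3:
  fixes N l m :: nat and S :: "nat \<Rightarrow> nat set" and \<epsilon> :: real
  assumes "N > 0" and "l > 0" and "l dvd N"
    and "\<forall>i\<in>{1..m}. S i \<subseteq> {1..N} \<and> card (S i) = N div l"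
    and "\<epsilon> > 0"
    and "\<exists>J. J \<subseteq> {1..m} \<and> card J = l \<and> (\<Union>i\<in>J. S i) = {1..N}"
  shows "\<exists>K. size K = l \<and> set_mset K \<subseteq> rp_points N m \<and>
           krp_cost (rp_dist S \<epsilon>) (pmf_of_set (Elem ` {1..N})) l K
             \<le> real l * (1 + 1 / exp 1)"
proof -
  obtain J where J: "J \<subseteq> {1..m}" "card J = l" "(\<Union>i\<in>J. S i) = {1..N}"
    using assms(6) by blast
  have "finite J"
    using J(1) by (rule finite_subset) simp
  define U where "U = Elem ` {1..N}"
  have U: "finite U" "U \<noteq> {}" "card U = card J * (N div l)"
    using assms(1,3) J(2) by (simp_all add: U_def card_image inj_on_def)
  have cover: "(\<Union>j\<in>J. Elem ` S j) = U"
    unfolding U_def J(3)[symmetric] by blast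
  have "\<forall>j\<in>J. card (Elem ` S j) \<le> N div l"
    using assms(4) J(1) by (auto simp: card_image inj_on_def)
  then obtain own where own: "\<forall>x\<in>U. own x \<in> J \<and> x \<in> Elem ` S (own x)"
    and fiber: "\<And>j. j \<in> J \<Longrightarrow> card {x\<in>U. own x = j} = N div l"
    using exact_cover_owner[OF U(1) \<open>finite J\<close> cover _ U(3)] by blast
  have "measure_pmf.prob (pmf_of_set U) {x. own x = j} = 1 / real l" if "j \<in> J" for j
    using fiber[OF that] U assms(1-3) J(2) by (simp add: measure_pmf_of_set Int_def real_of_nat_div)
  moreover have "\<forall>x\<in>set_pmf (pmf_of_set U).
      rp_dist S \<epsilon> (SetPt (own x)) x \<le> 1 \<and> (\<forall>j. rp_dist S \<epsilon> (SetPt j) x \<le> 2)"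
    using own U(1,2) rp_dist_SetPt_le[OF assms(5)] by simp blast
  ultimately have "krp_cost (rp_dist S \<epsilon>) (pmf_of_set U) l (image_mset SetPt (mset_set J))
      \<le> real l * (1 + 1 / exp 1)"
    using krp_cost_balanced_owner_le[of "pmf_of_set U" J l "rp_dist S \<epsilon>" SetPt own]
      U(1,2) \<open>finite J\<close> J(2) assms(2)
    by simp
  moreover have "size (image_mset SetPt (mset_set J)) = l"
    using J(2) by simp
  moreover have "set_mset (image_mset SetPt (mset_set J)) \<subseteq> rp_points N m"
    using J(1) \<open>finite J\<close> by (auto simp: rp_points_def)
  ultimately show ?thesis
    unfolding U_def by blast
qed

end
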